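(* Let $n\in\mathbb{N}$ and $m=(n-1)^2+1$. Let $G$ be a finite group of order $mn$ and $H$ a normal subgroup of $G$ of order $n$. Suppose $D$ is an $(mn,(n-1)^2+n,n)$-difference set in $G$ with $H\subseteq D$, and let $R=D\setminus H$. Then (i) $R$ is an $(m,n,m-1,n-2)$-relative difference set in $G$ relative to $H$; (ii) the family $\{hR: h\in H\}$ is an $(n[(n-1)^2+1],n,(n-1)^2,n(n-2),0)$-DPDF and an $(n[(n-1)^2+1],n,(n-1)^2,n(n-1)(n-2),n(n-1)^2)$-EPDF in $G$.
   Context: Groups are written multiplicatively with identity $e$; $G^*=G\setminus\{e\}$; $hR=\{hr:r\in R\}$. For $D\subseteq G$, $\Delta(D)$ is the multiset $\{xy^{-1}: x,y\in D, x\ne y\}$; for $D_1,D_2\subseteq G$, $\Delta(D_1,D_2)$ is the multiset $\{xy^{-1}:x\in D_1,y\in D_2\}$. A $(v,k,\lambda)$-difference set in a group of order $v$ is a $k$-subset $D$ such that $\Delta(D)$ contains each element of $G^*$ exactly $\lambda$ times. If $|G|=mn$ and $H$ is a normal subgroup of order $n$, a $k$-subset $R$ is an $(m,n,k,\lambda)$-relative difference set relative to $H$ if $\Delta(R)$ contains each element of $G\setminus H$ exactly $\lambda$ times and no element of $H\setminus\{e\}$. For a family $A=\{A_1,\dots,A_s\}$ of pairwise disjoint subsets, ${\rm Int}(A)=\bigcup_i\Delta(A_i)$ and ${\rm Ext}(A)=\bigcup_{i\ne j}\Delta(A_i,A_j)$ (multiset unions). For $|G|=v$, a $(v,s,k,\lambda,\mu)$-DPDF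 is a family of $s$ pairwise disjoint $k$-subsets of $G^*$ with union $S$ such that ${\rm Int}(A)$ contains each element of $S$ exactly $\lambda$ times and each element of $G\setminus(S\cup\{e\})$ exactly $\mu$ times; a $(v,s,k,\lambda,\mu)$-EPDF is defined the same way using ${\rm Ext}(A)$. *)

theory Defs
  imports "HOL-Algebra.Algebra" "HOL-Library.Multiset"
begin

definition diff_mset :: "('a, 'b) monoid_scheme \<Rightarrow> 'a set \<Rightarrow> 'a multiset" where
  "diff_mset G D = image_mset (\<lambda>(x, y). x \<otimes>\<^bsub>G\<^esub> inv\<^bsub>G\<^esub> y)
      (mset_set {(x, y). x \<in> D \<and> y \<in> D \<and> x \<noteq> y})"

definition diff2_mset :: "('a, 'b) monoid_scheme \<Rightarrow> 'a set \<Rightarrow> 'a set \<Rightarrow> 'a multiset" where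
  "diff2_mset G D1 D2 = image_mset (\<lambda>(x, y). x \<otimes>\<^bsub>G\<^esub> inv\<^bsub>G\<^esub> y) (mset_set (D1 \<times> D2))"

definition difference_set ::
  "('a, 'b) monoid_scheme \<Rightarrow> nat \<Rightarrow> nat \<Rightarrow> nat \<Rightarrow> 'a set \<Rightarrow> bool" where
  "difference_set G v k lam D \<longleftrightarrow>
     order G = v \<and> D \<subseteq> carrier G \<and> card D = k \<and>
     (\<forall>g \<in> carrier G - {\<one>\<^bsub>G\<^esub>}. count (diff_mset G D) g = lam)"

definition relative_difference_set ::
  "('a, 'b) monoid_scheme \<Rightarrow> nat \<Rightarrow> nat \<Rightarrow> nat \<Rightarrow> nat \<Rightarrow> 'a set \<Rightarrow> 'a set \<Rightarrow> bool" where
  "relative_difference_set G m n k lam H R \<longleftrightarrow>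
     order G = m * n \<and> H \<lhd> G \<and> card H = n \<and>
     R \<subseteq> carrier G \<and> card R = k \<and>
     (\<forall>g \<in> carrier G - H. count (diff_mset G R) g = lam) \<and>
     (\<forall>g \<in> H - {\<one>\<^bsub>G\<^esub>}. count (diff_mset G R) g = 0)"

definition disjoint_family_ksub ::
  "('a, 'b) monoid_scheme \<Rightarrow> nat \<Rightarrow> nat \<Rightarrow> 'i set \<Rightarrow> ('i \<Rightarrow> 'a set) \<Rightarrow> bool" where
  "disjoint_family_ksub G s k I A \<longleftrightarrow>
     finite I \<and> card I = s \<and>
     (\<forall>i \<in> I. A i \<subseteq> carrier G - {\<one>\<^bsub>G\<^esub>} \<and> card (A i) = k) \<and>
     (\<forall>i \<in> I. \<forall>j \<in> I. i \<noteq> j \<longrightarrow> A i \<inter> A j = {})"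

definition Int_mset :: "('a, 'b) monoid_scheme \<Rightarrow> 'i set \<Rightarrow> ('i \<Rightarrow> 'a set) \<Rightarrow> 'a multiset" where
  "Int_mset G I A = (\<Sum>i \<in> I. diff_mset G (A i))"

definition Ext_mset :: "('a, 'b) monoid_scheme \<Rightarrow> 'i set \<Rightarrow> ('i \<Rightarrow> 'a set) \<Rightarrow> 'a multiset" where
  "Ext_mset G I A = (\<Sum>i \<in> I. \<Sum>j \<in> I - {i}. diff2_mset G (A i) (A j))"

definition DPDF ::
  "('a, 'b) monoid_scheme \<Rightarrow> nat \<Rightarrow> nat \<Rightarrow> nat \<Rightarrow> nat \<Rightarrow> nat \<Rightarrow> 'i set \<Rightarrow> ('i \<Rightarrow> 'a set) \<Rightarrow> bool" where
  "DPDF G v s k lam mu I A \<longleftrightarrow>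
     order G = v \<and> disjoint_family_ksub G s k I A \<and>
     (\<forall>g \<in> (\<Union>i\<in>I. A i). count (Int_mset G I A) g = lam) \<and>
     (\<forall>g \<in> carrier G - ((\<Union>i\<in>I. A i) \<union> {\<one>\<^bsub>G\<^esub>}). count (Int_mset G I A) g = mu)"

definition EPDF ::
  "('a, 'b) monoid_scheme \<Rightarrow> nat \<Rightarrow> nat \<Rightarrow> nat \<Rightarrow> nat \<Rightarrow> nat \<Rightarrow> 'i set \<Rightarrow> ('i \<Rightarrow> 'a set) \<Rightarrow> bool" where
  "EPDF G v s k lam mu I A \<longleftrightarrow>
     order G = v \<and> disjoint_family_ksub G s k I A \<and>
     (\<forall>g \<in> (\<Union>i\<in>I. A i). count (Ext_mset G I A) g = lam) \<and>
     (\<forall>g \<in> carrier G - ((\<Union>i\<in>I. A i) \<union> {\<one>\<^bsub>G\<^esub>}). count (Ext_mset G I A) g = mu)"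

end

theory Submission
  imports Defs
begin

text \<open>For 1 \<noteq> g \<in> H the subgroup H alone already supplies n = \<lambda>
  representations g = x y^-1 with x, y \<in> D, so R has no differences in H: its (n - 1)^2 = m - 1
  elements lie in distinct nontrivial cosets of H, i.e. R is a transversal of these cosets.
  Hence every g \<notin> H has exactly one representation in each of H R^-1 and R H^-1 and none
  in H H^-1, which leaves n - 2 in R R^-1. The translates h R (h \<in> H) partition G - H;
  conjugation by h preserves H, so each translate has the same internal differences as R, and the
  external differences are what remains of the differences of G - H, which are counted directly.\<close>

section \<open>Counting differences\<close>

text \<open>The ASCII multiset notation <# would clash with left cosets.\<close>
no_notation (ASCII) subset_mset (infix \<open><#\<close> 50)

lemma count_image_mset_mset_set:
  "finite A \<Longrightarrow> count (image_mset f (mset_set A)) x = card {a \<in> A. f a = x}"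
  by (auto simp: count_image_mset vimage_def intro!: arg_cong[where f = card])

text \<open>The number of pairs (x, y) \<in> A \<times> B with x y^-1 = g; such a pair is determined by y,
  as x = g y.\<close>
definition diff_count :: "('a, 'b) monoid_scheme \<Rightarrow> 'a set \<Rightarrow> 'a set \<Rightarrow> 'a \<Rightarrow> nat" where
  "diff_count G A B g = card {y \<in> B. g \<otimes>\<^bsub>G\<^esub> y \<in> A}"

lemma diff_count_Un_left:
  assumes "A1 \<inter> A2 = {}" "finite B"
  shows "diff_count G (A1 \<union> A2) B g = diff_count G A1 B g + diff_count G A2 B g"
proof -
  have "{y \<in> B. g \<otimes>\<^bsub>G\<^esub> y \<in> A1 \<union> A2} = {y \<in> B. g \<otimes>\<^bsub>G\<^esub> y \<in> A1} \<union> {y \<in> B. g \<otimes>\<^bsub>G\<^esub> y \<in> A2}"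
    by auto
  then show ?thesis
    unfolding diff_count_def using assms by (simp add: card_Un_disjoint disjoint_iff)
qed

lemma diff_count_Un_right:
  assumes "B1 \<inter> B2 = {}" "finite B1" "finite B2"
  shows "diff_count G A (B1 \<union> B2) g = diff_count G A B1 g + diff_count G A B2 g"
proof -
  have "{y \<in> B1 \<union> B2. g \<otimes>\<^bsub>G\<^esub> y \<in> A} = {y \<in> B1. g \<otimes>\<^bsub>G\<^esub> y \<in> A} \<union> {y \<in> B2. g \<otimes>\<^bsub>G\<^esub> y \<in> A}"
    by auto
  then show ?thesis
    unfolding diff_count_def using assms by (simp add: card_Un_disjoint disjoint_iff)
qed

lemma diff_count_Un:
  assumes "A \<inter> B = {}" "finite A" "finite B"
  shows "diff_count G (A \<union> B) (A \<union> B) g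
    = diff_count G A A g + diff_count G A B g + diff_count G B A g + diff_count G B B g"
  using assms by (simp add: diff_count_Un_left diff_count_Un_right)

lemma diff_count_UN_left:
  assumes "finite I" "finite B" "disjoint_family_on A I"
  shows "diff_count G (\<Union>i\<in>I. A i) B g = (\<Sum>i\<in>I. diff_count G (A i) B g)"
proof -
  have "{y \<in> B. g \<otimes>\<^bsub>G\<^esub> y \<in> (\<Union>i\<in>I. A i)} = (\<Union>i\<in>I. {y \<in> B. g \<otimes>\<^bsub>G\<^esub> y \<in> A i})"
    by auto
  moreover have "card (\<Union>i\<in>I. {y \<in> B. g \<otimes>\<^bsub>G\<^esub> y \<in> A i})
      = (\<Sum>i\<in>I. card {y \<in> B. g \<otimes>\<^bsub>G\<^esub> y \<in> A i})"
    using assms by (intro card_UN_disjoint) (auto simp: disjoint_family_on_def)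
  ultimately show ?thesis
    unfolding diff_count_def by simp
qed

lemma diff_count_UN_right:
  assumes "finite I" "\<forall>i\<in>I. finite (B i)" "disjoint_family_on B I"
  shows "diff_count G A (\<Union>i\<in>I. B i) g = (\<Sum>i\<in>I. diff_count G A (B i) g)"
proof -
  have "{y \<in> (\<Union>i\<in>I. B i). g \<otimes>\<^bsub>G\<^esub> y \<in> A} = (\<Union>i\<in>I. {y \<in> B i. g \<otimes>\<^bsub>G\<^esub> y \<in> A})"
    by auto
  moreover have "card (\<Union>i\<in>I. {y \<in> B i. g \<otimes>\<^bsub>G\<^esub> y \<in> A})
      = (\<Sum>i\<in>I. card {y \<in> B i. g \<otimes>\<^bsub>G\<^esub> y \<in> A})"
    using assms by (intro card_UN_disjoint) (auto simp: disjoint_family_on_def)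
  ultimately show ?thesis
    unfolding diff_count_def by simp
qed

context group
begin

lemma mult_inv_eq_iff:
  assumes "x \<in> carrier G" "y \<in> carrier G" "g \<in> carrier G"
  shows "x \<otimes> inv y = g \<longleftrightarrow> x = g \<otimes> y"
  using inv_solve_right[OF assms(3,1,2)] by auto

lemma count_diff2_mset:
  assumes "finite A" "finite B" "A \<subseteq> carrier G" "B \<subseteq> carrier G" "g \<in> carrier G"
  shows "count (diff2_mset G A B) g = diff_count G A B g"
proof -
  have "{p \<in> A \<times> B. (\<lambda>(x, y). x \<otimes> inv y) p = g} = (\<lambda>y. (g \<otimes> y, y)) ` {y \<in> B. g \<otimes> y \<in> A}"
  proof (intro Set.set_eqI HOL.iffI)
    fix p assume "p \<in> {p \<in> A \<times> B. (\<lambda>(x, y). x \<otimes> inv y) p = g}"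
    then obtain x y where "p = (x, y)" "x \<in> A" "y \<in> B" "x \<otimes> inv y = g"
      by auto
    moreover have "x = g \<otimes> y"
      using calculation assms(3-5) mult_inv_eq_iff by blast
    ultimately show "p \<in> (\<lambda>y. (g \<otimes> y, y)) ` {y \<in> B. g \<otimes> y \<in> A}"
      by auto
  qed (use assms(4,5) in \<open>auto simp: m_assoc subsetD\<close>)
  moreover have "inj_on (\<lambda>y. (g \<otimes> y, y)) {y \<in> B. g \<otimes> y \<in> A}"
    by (simp add: inj_on_def)
  ultimately show ?thesis
    unfolding diff2_mset_def diff_count_def
    using assms(1,2) by (simp add: count_image_mset_mset_set card_image)
qed

lemma count_diff_mset:
  assumes "finite A" "A \<subseteq> carrier G" "g \<in> carrier G" "g \<noteq> \<one>"
  shows "count (diff_mset G A) g = diff_count G A A g"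
proof -
  have off_diagonal: "{(x, y). x \<in> A \<and> y \<in> A \<and> x \<noteq> y} \<subseteq> A \<times> A"
    by auto
  have "{p \<in> {(x, y). x \<in> A \<and> y \<in> A \<and> x \<noteq> y}. (\<lambda>(x, y). x \<otimes> inv y) p = g}
      = {p \<in> A \<times> A. (\<lambda>(x, y). x \<otimes> inv y) p = g}"
    using assms(2,4) by (auto simp: subsetD)
  then have "count (diff_mset G A) g = count (diff2_mset G A A) g"
    unfolding diff_mset_def diff2_mset_def using assms(1) finite_subset[OF off_diagonal]
    by (simp add: count_image_mset_mset_set)
  then show ?thesis
    using count_diff2_mset assms by simp
qed

lemma diff_count_swap:
  assumes "A \<subseteq> carrier G" "B \<subseteq> carrier G" "g \<in> carrier G"
  shows "diff_count G A B g = diff_count G B A (inv g)"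
proof -
  have "{x \<in> A. inv g \<otimes> x \<in> B} = (\<lambda>y. g \<otimes> y) ` {y \<in> B. g \<otimes> y \<in> A}"
  proof (intro Set.equalityI Set.subsetI)
    fix x assume x: "x \<in> {x \<in> A. inv g \<otimes> x \<in> B}"
    then have "x = g \<otimes> (inv g \<otimes> x)"
      using assms by (simp add: m_assoc[symmetric] subsetD)
    then show "x \<in> (\<lambda>y. g \<otimes> y) ` {y \<in> B. g \<otimes> y \<in> A}"
      using x by (metis (mono_tags, lifting) image_eqI mem_Collect_eq)
  qed (use assms in \<open>auto simp: m_assoc[symmetric] subsetD\<close>)
  moreover have "inj_on (\<lambda>y. g \<otimes> y) {y \<in> B. g \<otimes> y \<in> A}"
    using assms by (intro inj_on_g') auto
  ultimately show ?thesis
    unfolding diff_count_def by (simp add: card_image)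
qed

lemma diff_count_carrier_left:
  assumes "B \<subseteq> carrier G" "g \<in> carrier G"
  shows "diff_count G (carrier G) B g = card B"
proof -
  have "{y \<in> B. g \<otimes> y \<in> carrier G} = B"
    using assms by auto
  then show ?thesis
    unfolding diff_count_def by simp
qed

lemma diff_count_carrier_right:
  assumes "A \<subseteq> carrier G" "g \<in> carrier G"
  shows "diff_count G A (carrier G) g = card A"
  using assms diff_count_swap[of A "carrier G" g] diff_count_carrier_left[of A "inv g"] by simp

lemma diff_count_complement:
  assumes "finite (carrier G)" "H \<subseteq> carrier G" "g \<in> carrier G"
  shows "diff_count G (carrier G - H) (carrier G - H) g + card H
    = card (carrier G - H) + diff_count G H H g"
proof -
  let ?C = "carrier G - H"
  have fin: "finite H" "finite ?C"
    using finite_subset[OF assms(2,1)] assms(1) by auto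
  have "card ?C = diff_count G (H \<union> ?C) ?C g"
    using diff_count_carrier_left[of ?C g] assms(2,3) by (simp add: Un_absorb1)
  also have "\<dots> = diff_count G H ?C g + diff_count G ?C ?C g"
    using fin by (intro diff_count_Un_left) auto
  finally have "card ?C = diff_count G H ?C g + diff_count G ?C ?C g" .
  moreover have "card H = diff_count G H (H \<union> ?C) g"
    using diff_count_carrier_right[OF assms(2,3)] assms(2) by (simp add: Un_absorb1)
  moreover have "diff_count G H (H \<union> ?C) g = diff_count G H H g + diff_count G H ?C g"
    using fin by (intro diff_count_Un_right) auto
  ultimately show ?thesis
    by linarith
qed

lemma mem_l_coset_iff:
  assumes "A \<subseteq> carrier G" "h \<in> carrier G" "x \<in> carrier G"
  shows "x \<in> h <# A \<longleftrightarrow> inv h \<otimes> x \<in> A"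
proof
  assume "x \<in> h <# A"
  then obtain a where "a \<in> A" "x = h \<otimes> a"
    unfolding l_coset_def by blast
  then show "inv h \<otimes> x \<in> A"
    using assms by (auto simp: m_assoc[symmetric] subsetD)
next
  assume "inv h \<otimes> x \<in> A"
  moreover have "x = h \<otimes> (inv h \<otimes> x)"
    using assms(2,3) by (simp add: m_assoc[symmetric])
  ultimately show "x \<in> h <# A"
    unfolding l_coset_def by blast
qed

lemma card_l_coset:
  assumes "A \<subseteq> carrier G" "h \<in> carrier G"
  shows "card (h <# A) = card A"
proof -
  have "h <# A = (\<lambda>a. h \<otimes> a) ` A"
    unfolding l_coset_def by auto
  moreover have "inj_on (\<lambda>a. h \<otimes> a) A"
    using assms by (rule inj_on_g')
  ultimately show ?thesis
    by (simp add: card_image)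
qed

lemma diff_count_l_coset:
  assumes "A \<subseteq> carrier G" "B \<subseteq> carrier G" "h \<in> carrier G" "g \<in> carrier G"
  shows "diff_count G (h <# A) (h <# B) g = diff_count G A B (inv h \<otimes> g \<otimes> h)"
proof -
  have "g \<otimes> (h \<otimes> b) \<in> h <# A \<longleftrightarrow> inv h \<otimes> g \<otimes> h \<otimes> b \<in> A" if "b \<in> B" for b
    using that assms by (simp add: mem_l_coset_iff m_assoc subsetD)
  then have "{y \<in> h <# B. g \<otimes> y \<in> h <# A} = (\<lambda>b. h \<otimes> b) ` {b \<in> B. inv h \<otimes> g \<otimes> h \<otimes> b \<in> A}"
    unfolding l_coset_def by blast
  moreover have "inj_on (\<lambda>b. h \<otimes> b) {b \<in> B. inv h \<otimes> g \<otimes> h \<otimes> b \<in> A}"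
    using assms by (intro inj_on_g') auto
  ultimately show ?thesis
    unfolding diff_count_def by (simp add: card_image)
qed

lemma conj_cancel:
  assumes "h \<in> carrier G" "g \<in> carrier G"
  shows "h \<otimes> (inv h \<otimes> g \<otimes> h) \<otimes> inv h = g"
  using assms by (simp add: m_assoc[symmetric]) (simp add: m_assoc)

lemma conj_eq_one_iff:
  assumes "h \<in> carrier G" "g \<in> carrier G"
  shows "inv h \<otimes> g \<otimes> h = \<one> \<longleftrightarrow> g = \<one>"
proof
  assume "inv h \<otimes> g \<otimes> h = \<one>"
  then show "g = \<one>"
    using conj_cancel[OF assms] assms by simp
qed (use assms in simp)

lemma inv_mem_subgroup_iff:
  assumes "subgroup H G" "g \<in> carrier G"
  shows "inv g \<in> H \<longleftrightarrow> g \<in> H"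
  using subgroup.m_inv_closed[OF assms(1), of "inv g"] subgroup.m_inv_closed[OF assms(1), of g] assms(2)
  by auto

lemma diff_count_subgroup:
  assumes "subgroup H G" "g \<in> carrier G"
  shows "diff_count G H H g = (if g \<in> H then card H else 0)"
proof (cases "g \<in> H")
  case True
  then have "{y \<in> H. g \<otimes> y \<in> H} = H"
    using subgroup.m_closed[OF assms(1)] by blast
  then show ?thesis
    using True unfolding diff_count_def by simp
next
  case False
  have "g \<otimes> y \<notin> H" if "y \<in> H" for y
  proof
    assume "g \<otimes> y \<in> H"
    then have "g \<otimes> y \<otimes> inv y \<in> H"
      using that subgroup.m_closed[OF assms(1)] subgroup.m_inv_closed[OF assms(1)] by blast
    then show False
      using False that assms(2) subgroup.mem_carrier[OF assms(1)] by (force simp: m_assoc)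
  qed
  then have "{y \<in> H. g \<otimes> y \<in> H} = {}"
    by blast
  then show ?thesis
    using False unfolding diff_count_def by (metis card.empty)
qed

lemma count_Ext_plus_Int_mset:
  assumes "finite I" "\<forall>i\<in>I. finite (A i) \<and> A i \<subseteq> carrier G" "disjoint_family_on A I"
    and "g \<in> carrier G" "g \<noteq> \<one>"
  shows "count (Ext_mset G I A) g + count (Int_mset G I A) g
    = diff_count G (\<Union>i\<in>I. A i) (\<Union>i\<in>I. A i) g"
proof -
  have "count (Ext_mset G I A) g + count (Int_mset G I A) g
      = (\<Sum>i\<in>I. (\<Sum>j\<in>I - {i}. diff_count G (A i) (A j) g) + diff_count G (A i) (A i) g)"
    unfolding Ext_mset_def Int_mset_def count_sum sum.distrib[symmetric]
    using assms by (intro sum.cong refl arg_cong2[where f = "(+)"])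
      (auto simp: count_diff2_mset count_diff_mset)
  also have "\<dots> = (\<Sum>i\<in>I. \<Sum>j\<in>I. diff_count G (A i) (A j) g)"
    using assms(1) by (simp add: sum.remove add.commute)
  also have "\<dots> = (\<Sum>i\<in>I. diff_count G (A i) (\<Union>j\<in>I. A j) g)"
    using assms(1-3) by (simp add: diff_count_UN_right)
  also have "\<dots> = diff_count G (\<Union>i\<in>I. A i) (\<Union>j\<in>I. A j) g"
    using assms(1-3) by (simp add: diff_count_UN_left)
  finally show ?thesis .
qed

lemma count_Int_mset_l_cosets:
  assumes "I \<subseteq> carrier G" "finite R" "R \<subseteq> carrier G" "g \<in> carrier G" "g \<noteq> \<one>"
  shows "count (Int_mset G I (\<lambda>h. h <# R)) g = (\<Sum>h\<in>I. diff_count G R R (inv h \<otimes> g \<otimes> h))"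
proof -
  have "finite (h <# R)" for h
    using assms(2) unfolding l_coset_def by simp
  then show ?thesis
    unfolding Int_mset_def count_sum
    using assms by (intro sum.cong refl)
      (auto simp: count_diff_mset diff_count_l_coset l_coset_subset_G subsetD)
qed

end

section \<open>Transversals of the nontrivial cosets\<close>

definition nontrivial_coset_transversal :: "('a, 'b) monoid_scheme \<Rightarrow> 'a set \<Rightarrow> 'a set \<Rightarrow> bool" where
  "nontrivial_coset_transversal G H R \<longleftrightarrow>
     R \<subseteq> carrier G \<and> bij_betw (\<lambda>r. H #>\<^bsub>G\<^esub> r) R (rcosets\<^bsub>G\<^esub> H - {H})"

context group
begin

lemma rcos_eq_iff:
  assumes "subgroup H G" "x \<in> carrier G" "y \<in> carrier G"
  shows "H #> x = H #> y \<longleftrightarrow> x \<otimes> inv y \<in> H"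
proof
  assume "H #> x = H #> y"
  then have "x \<in> H #> y"
    using rcos_self[OF assms(2,1)] by simp
  then show "x \<otimes> inv y \<in> H"
    using subgroup.rcos_module_imp[OF assms(1) is_group assms(3)] by blast
next
  assume "x \<otimes> inv y \<in> H"
  then have "x \<in> H #> y"
    by (rule subgroup.rcos_module_rev[OF assms(1) is_group assms(3,2)])
  then show "H #> x = H #> y"
    using repr_independence[OF _ assms(3,1)] by simp
qed

lemma transversal_subset:
  assumes "subgroup H G" "nontrivial_coset_transversal G H R"
  shows "R \<subseteq> carrier G - H"
proof
  fix r assume r: "r \<in> R"
  have rG: "r \<in> carrier G"
    using r assms(2) unfolding nontrivial_coset_transversal_def by blast
  have "H #> r \<noteq> H"
    using r assms(2) unfolding nontrivial_coset_transversal_def bij_betw_def by blast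
  then show "r \<in> carrier G - H"
    using rG coset_join2[OF rG assms(1)] by blast
qed

lemma transversal_ex1:
  assumes "subgroup H G" "nontrivial_coset_transversal G H R" "a \<in> carrier G - H"
  shows "\<exists>!r \<in> R. r \<otimes> inv a \<in> H"
proof -
  have RG: "R \<subseteq> carrier G" and bij: "bij_betw (\<lambda>r. H #> r) R (rcosets H - {H})"
    using assms(2) unfolding nontrivial_coset_transversal_def by auto
  have "H #> a \<noteq> H"
    using rcos_self[of a H] assms(1,3) by blast
  then have "H #> a \<in> rcosets H - {H}"
    using rcosetsI[OF subgroup.subset[OF assms(1)]] assms(3) by blast
  then obtain r where r: "r \<in> R" "H #> r = H #> a"
    using bij unfolding bij_betw_def by (metis imageE)
  have "r' = r" if "r' \<in> R" "r' \<otimes> inv a \<in> H" for r'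
    using that r bij assms(1,3) RG rcos_eq_iff
    unfolding bij_betw_def inj_on_def by (metis Diff_iff subsetD)
  then show ?thesis
    using r assms(1,3) RG rcos_eq_iff by blast
qed

lemma rcosets_inj_on_no_differences:
  assumes "subgroup H G" "finite R" "R \<subseteq> carrier G"
    and "\<forall>g \<in> H - {\<one>}. diff_count G R R g = 0"
  shows "inj_on (\<lambda>r. H #> r) R"
proof (rule inj_onI)
  fix x y assume xy: "x \<in> R" "y \<in> R" "H #> x = H #> y"
  have xyG: "x \<in> carrier G" "y \<in> carrier G"
    using xy(1,2) assms(3) by auto
  let ?g = "x \<otimes> inv y"
  have "y \<in> {z \<in> R. ?g \<otimes> z \<in> R}"
    using xy xyG by (simp add: m_assoc)
  then have "diff_count G R R ?g \<noteq> 0"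
    unfolding diff_count_def using assms(2) by auto
  moreover have "?g \<in> H"
    using rcos_eq_iff[OF assms(1) xyG] xy(3) by simp
  ultimately have "?g = \<one>"
    using assms(4) by (metis DiffI singletonD)
  then show "x = y"
    using mult_inv_eq_iff[OF xyG] xyG by simp
qed

lemma nontrivial_coset_transversalI:
  assumes "subgroup H G" "finite (carrier G)" "R \<subseteq> carrier G - H"
    and "(card R + 1) * card H = order G"
    and "\<forall>g \<in> H - {\<one>}. diff_count G R R g = 0"
  shows "nontrivial_coset_transversal G H R"
proof -
  have finR: "finite R"
    using assms(2,3) finite_subset by blast
  have inj: "inj_on (\<lambda>r. H #> r) R"
    using rcosets_inj_on_no_differences[OF assms(1) finR] assms(3,5) by blast
  have sub: "(\<lambda>r. H #> r) ` R \<subseteq> rcosets H - {H}"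
  proof
    fix c assume "c \<in> (\<lambda>r. H #> r) ` R"
    then obtain r where r: "r \<in> R" "c = H #> r"
      by blast
    have "r \<in> carrier G" "r \<notin> H"
      using r(1) assms(3) by auto
    then show "c \<in> rcosets H - {H}"
      using r rcosetsI[OF subgroup.subset[OF assms(1)]] rcos_self[OF _ assms(1)] by force
  qed
  have finRC: "finite (rcosets H)"
    using rcosets_subset_PowG[OF assms(1)] assms(2) finite_subset by blast
  have "card H > 0"
    using subgroup.one_closed[OF assms(1)] subgroup.subset[OF assms(1)] assms(2)
    by (metis card_gt_0_iff empty_iff finite_subset)
  then have "card (rcosets H) = card R + 1"
    using lagrange[OF assms(1)] assms(4) by (metis mult_cancel2 not_gr0)
  then have "card ((\<lambda>r. H #> r) ` R) = card (rcosets H - {H})"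
    using card_image[OF inj] subgroup.subgroup_in_rcosets[OF assms(1) is_group] finRC by simp
  then have "(\<lambda>r. H #> r) ` R = rcosets H - {H}"
    using sub finRC by (metis card_subset_eq finite_Diff)
  then show ?thesis
    unfolding nontrivial_coset_transversal_def bij_betw_def using inj assms(3) by blast
qed

lemma l_cosets_transversal_disjoint:
  assumes "subgroup H G" "nontrivial_coset_transversal G H R"
  shows "disjoint_family_on (\<lambda>h. h <# R) H"
  unfolding disjoint_family_on_def
proof (intro ballI impI, rule ccontr)
  fix h h' assume hh': "h \<in> H" "h' \<in> H" "h \<noteq> h'" "(h <# R) \<inter> (h' <# R) \<noteq> {}"
  then obtain r r' where r: "r \<in> R" "r' \<in> R" "h \<otimes> r = h' \<otimes> r'"
    unfolding l_coset_def by blast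
  have RG: "R \<subseteq> carrier G - H"
    by (rule transversal_subset[OF assms])
  have hG: "h \<in> carrier G" "h' \<in> carrier G"
    using hh'(1,2) subgroup.mem_carrier[OF assms(1)] by auto
  have rG: "r \<in> carrier G" "r' \<in> carrier G"
    using r(1,2) RG by auto
  have "r \<otimes> inv r' = inv h \<otimes> h'"
    using r(3) hG rG by (metis inv_solve_left inv_solve_right m_assoc m_closed inv_closed)
  then have "r \<otimes> inv r' \<in> H"
    using hh'(1,2) subgroup.m_closed[OF assms(1)] subgroup.m_inv_closed[OF assms(1)] by simp
  moreover have "r' \<otimes> inv r' \<in> H"
    using rG subgroup.one_closed[OF assms(1)] by simp
  ultimately have "r = r'"
    using transversal_ex1[OF assms, of r'] r(1,2) RG by blast
  then show False
    using r(3) hG rG hh'(3) by simp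
qed

lemma l_cosets_transversal_cover:
  assumes "subgroup H G" "nontrivial_coset_transversal G H R"
  shows "(\<Union>h\<in>H. h <# R) = carrier G - H"
proof (intro Set.equalityI Set.subsetI)
  have RG: "R \<subseteq> carrier G - H"
    by (rule transversal_subset[OF assms])
  fix x assume "x \<in> (\<Union>h\<in>H. h <# R)"
  then obtain h r where hr: "h \<in> H" "r \<in> R" "x = h \<otimes> r"
    unfolding l_coset_def by blast
  have "inv h \<otimes> x = r"
    using hr RG subgroup.mem_carrier[OF assms(1)] by (auto simp: m_assoc[symmetric])
  then show "x \<in> carrier G - H"
    using hr RG subgroup.mem_carrier[OF assms(1)] subgroup.m_closed[OF assms(1)]
      subgroup.m_inv_closed[OF assms(1)] by (metis Diff_iff m_closed subsetD)
next
  fix x assume x: "x \<in> carrier G - H"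
  then obtain r where r: "r \<in> R" "r \<otimes> inv x \<in> H"
    using transversal_ex1[OF assms] by blast
  have rG: "r \<in> carrier G"
    using r(1) transversal_subset[OF assms] by blast
  have "inv (r \<otimes> inv x) = x \<otimes> inv r"
    using rG x by (simp add: inv_mult_group)
  then have "x \<otimes> inv r \<in> H"
    using r(2) subgroup.m_inv_closed[OF assms(1)] by metis
  moreover have "x = (x \<otimes> inv r) \<otimes> r"
    using rG x by (simp add: m_assoc)
  ultimately show "x \<in> (\<Union>h\<in>H. h <# R)"
    using r(1) unfolding l_coset_def by blast
qed

lemma l_cosets_transversal_family_ksub:
  assumes "subgroup H G" "finite (carrier G)" "nontrivial_coset_transversal G H R"
  shows "disjoint_family_ksub G (card H) (card R) H (\<lambda>h. h <# R)"
proof -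
  have "h <# R \<subseteq> carrier G - {\<one>}" if "h \<in> H" for h
    using that l_cosets_transversal_cover[OF assms(1,3)] subgroup.one_closed[OF assms(1)] by blast
  moreover have "card (h <# R) = card R" if "h \<in> H" for h
    using that transversal_subset[OF assms(1,3)] subgroup.mem_carrier[OF assms(1)]
    by (intro card_l_coset) auto
  moreover have "finite H"
    using finite_subset[OF subgroup.subset[OF assms(1)] assms(2)] .
  ultimately show ?thesis
    using l_cosets_transversal_disjoint[OF assms(1,3)]
    unfolding disjoint_family_ksub_def disjoint_family_on_def by auto
qed

lemma difference_set_minus_subgroup_no_differences:
  assumes "subgroup H G" "finite (carrier G)" "difference_set G v k (card H) D" "H \<subseteq> D"
    and "g \<in> H - {\<one>}"
  shows "diff_count G (D - H) (D - H) g = 0"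
proof -
  have DG: "D \<subseteq> carrier G"
    using assms(3) unfolding difference_set_def by blast
  have finD: "finite D"
    using finite_subset[OF DG assms(2)] .
  have gG: "g \<in> carrier G"
    using assms(5) subgroup.mem_carrier[OF assms(1)] by blast
  have "card H = diff_count G D D g"
    using assms(3,5) gG count_diff_mset[OF finD DG gG] unfolding difference_set_def by auto
  also have "\<dots> = diff_count G (H \<union> (D - H)) (H \<union> (D - H)) g"
    using assms(4) by (simp add: Un_absorb1)
  also have "\<dots> = diff_count G H H g + diff_count G H (D - H) g + diff_count G (D - H) H g
      + diff_count G (D - H) (D - H) g"
    using finD finite_subset[OF assms(4) finD] by (intro diff_count_Un) auto
  also have "diff_count G H H g = card H"
    using diff_count_subgroup[OF assms(1) gG] assms(5) by simp
  finally show ?thesis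
    by linarith
qed

lemma difference_set_minus_subgroup_transversal:
  assumes "subgroup H G" "finite (carrier G)"
    and "difference_set G ((k - card H + 1) * card H) k (card H) D" "H \<subseteq> D"
  shows "nontrivial_coset_transversal G H (D - H)"
proof (rule nontrivial_coset_transversalI[OF assms(1,2)])
  have DG: "D \<subseteq> carrier G"
    using assms(3) unfolding difference_set_def by blast
  have finD: "finite D"
    using finite_subset[OF DG assms(2)] .
  show "D - H \<subseteq> carrier G - H"
    using DG by blast
  show "(card (D - H) + 1) * card H = order G"
    using assms(3,4) finD unfolding difference_set_def by (simp add: card_Diff_subset finite_subset)
  show "\<forall>g\<in>H - {\<one>}. diff_count G (D - H) (D - H) g = 0"
    using difference_set_minus_subgroup_no_differences[OF assms(1,2,3,4)] by blast
qed

end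

section \<open>Translates of a relative difference set by a normal subgroup\<close>

context normal
begin

lemma conj_mem_iff:
  assumes "h \<in> carrier G" "g \<in> carrier G"
  shows "inv h \<otimes> g \<otimes> h \<in> H \<longleftrightarrow> g \<in> H"
proof
  assume "inv h \<otimes> g \<otimes> h \<in> H"
  then have "h \<otimes> (inv h \<otimes> g \<otimes> h) \<otimes> inv h \<in> H"
    using inv_op_closed2[OF assms(1)] by blast
  then show "g \<in> H"
    using conj_cancel[OF assms] by simp
qed (use assms inv_op_closed1[OF assms(1)] in blast)

lemma mult_mem_commute:
  assumes "a \<in> carrier G" "b \<in> carrier G" "a \<otimes> b \<in> H"
  shows "b \<otimes> a \<in> H"
proof -
  have "inv a \<otimes> (a \<otimes> b) \<otimes> a \<in> H"
    using conj_mem_iff assms by simp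
  then show ?thesis
    using assms by (simp add: m_assoc[symmetric])
qed

lemma transversal_diff_count_subgroup:
  assumes "nontrivial_coset_transversal G H R" "g \<in> carrier G - H"
  shows "diff_count G H R g = 1"
proof -
  have RG: "R \<subseteq> carrier G"
    using assms(1) unfolding nontrivial_coset_transversal_def by blast
  have gG: "g \<in> carrier G"
    using assms(2) by blast
  have "\<exists>!r \<in> R. r \<otimes> g \<in> H"
    using transversal_ex1[OF subgroup_axioms assms(1), of "inv g"] assms(2)
      inv_mem_subgroup_iff[OF subgroup_axioms gG] by simp
  then obtain r where r: "r \<in> R" "r \<otimes> g \<in> H" and uniq: "\<And>r'. r' \<in> R \<Longrightarrow> r' \<otimes> g \<in> H \<Longrightarrow> r' = r"
    by blast
  have "{y \<in> R. g \<otimes> y \<in> H} = {r}"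
  proof (intro Set.equalityI Set.subsetI)
    fix y assume y: "y \<in> {y \<in> R. g \<otimes> y \<in> H}"
    then have "y \<otimes> g \<in> H"
      using mult_mem_commute[OF gG] RG by blast
    then show "y \<in> {r}"
      using uniq y by blast
  next
    fix y assume "y \<in> {r}"
    then show "y \<in> {y \<in> R. g \<otimes> y \<in> H}"
      using r mult_mem_commute[OF _ gG] RG by blast
  qed
  then show ?thesis
    unfolding diff_count_def by simp
qed

lemma diff_count_subgroup_Un_transversal:
  assumes "finite (carrier G)" "nontrivial_coset_transversal G H R" "g \<in> carrier G - H"
  shows "diff_count G (H \<union> R) (H \<union> R) g = diff_count G R R g + 2"
proof -
  have RG: "R \<subseteq> carrier G - H"
    by (rule transversal_subset[OF subgroup_axioms assms(2)])
  have fin: "finite H" "finite R"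
    using finite_subset[OF RG] finite_subset[OF subset] assms(1) by auto
  have "inv g \<in> carrier G - H"
    using assms(3) inv_mem_subgroup_iff[OF subgroup_axioms] by simp
  then have "diff_count G R H g = 1"
    using diff_count_swap[of R H g] transversal_diff_count_subgroup[OF assms(2)] RG assms(3) subset
    by auto
  moreover have "diff_count G H R g = 1"
    by (rule transversal_diff_count_subgroup[OF assms(2,3)])
  moreover have "diff_count G H H g = 0"
    using diff_count_subgroup[OF subgroup_axioms] assms(3) by simp
  ultimately show ?thesis
    using diff_count_Un[of H R G g] RG fin by auto
qed

lemma difference_set_minus_subgroup_rds:
  assumes "finite (carrier G)" "difference_set G ((k - card H + 1) * card H) k (card H) D" "H \<subseteq> D"
  shows "relative_difference_set G (k - card H + 1) (card H) (k - card H) (card H - 2) H (D - H)"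
proof -
  have DG: "D \<subseteq> carrier G"
    using assms(2) unfolding difference_set_def by blast
  have finD: "finite D"
    using finite_subset[OF DG assms(1)] .
  have transversal: "nontrivial_coset_transversal G H (D - H)"
    by (rule difference_set_minus_subgroup_transversal[OF subgroup_axioms assms])
  have count_D: "count (diff_mset G D) g = diff_count G D D g"
    and count_R: "count (diff_mset G (D - H)) g = diff_count G (D - H) (D - H) g"
    if "g \<in> carrier G" "g \<noteq> \<one>" for g
    using count_diff_mset[of D g] count_diff_mset[of "D - H" g] finD DG that by auto
  have "count (diff_mset G (D - H)) g = card H - 2" if g: "g \<in> carrier G - H" for g
  proof -
    have g1: "g \<noteq> \<one>"
      using g subgroup.one_closed[OF subgroup_axioms] by blast
    have "diff_count G D D g = card H"
      using assms(2) g g1 count_D unfolding difference_set_def by auto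
    moreover have "H \<union> (D - H) = D"
      using assms(3) by blast
    ultimately show ?thesis
      using diff_count_subgroup_Un_transversal[OF assms(1) transversal g] count_R g g1 by simp
  qed
  moreover have "count (diff_mset G (D - H)) g = 0" if g: "g \<in> H - {\<one>}" for g
    using difference_set_minus_subgroup_no_differences[OF subgroup_axioms assms g] count_R g subset
    by auto
  moreover have "H \<lhd> G"
    by (rule normalI[OF subgroup_axioms]) (simp add: coset_eq)
  ultimately show ?thesis
    using assms DG finD unfolding relative_difference_set_def difference_set_def
    by (auto simp: card_Diff_subset finite_subset)
qed

lemma count_Int_mset_l_cosets_rds:
  assumes "finite (carrier G)" "relative_difference_set G m n k lam H R"
    and "g \<in> carrier G" "g \<noteq> \<one>"
  shows "count (Int_mset G H (\<lambda>h. h <# R)) g = (if g \<in> H then 0 else n * lam)"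
proof -
  have RG: "R \<subseteq> carrier G" and cardH: "card H = n"
    using assms(2) unfolding relative_difference_set_def by auto
  have finR: "finite R"
    using finite_subset[OF RG assms(1)] .
  have "diff_count G R R (inv h \<otimes> g \<otimes> h) = (if g \<in> H then 0 else lam)" if h: "h \<in> H" for h
  proof -
    have hG: "h \<in> carrier G"
      using h subset by blast
    have conj: "inv h \<otimes> g \<otimes> h \<in> carrier G" "inv h \<otimes> g \<otimes> h \<noteq> \<one>"
      using conj_eq_one_iff[OF hG assms(3)] hG assms(3,4) by auto
    then have "diff_count G R R (inv h \<otimes> g \<otimes> h) = count (diff_mset G R) (inv h \<otimes> g \<otimes> h)"
      using count_diff_mset[OF finR RG] by simp
    then show ?thesis
      using assms(2) conj conj_mem_iff[OF hG assms(3)]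
      unfolding relative_difference_set_def by auto
  qed
  then show ?thesis
    using count_Int_mset_l_cosets[OF subset finR RG assms(3,4)] cardH by simp
qed

lemma DPDF_l_cosets_transversal_rds:
  assumes "finite (carrier G)" "nontrivial_coset_transversal G H R"
    and "relative_difference_set G m n k lam H R"
  shows "DPDF G (m * n) n k (n * lam) 0 H (\<lambda>h. h <# R)"
  unfolding DPDF_def
proof (intro conjI ballI)
  show "order G = m * n"
    using assms(3) unfolding relative_difference_set_def by blast
  show "disjoint_family_ksub G n k H (\<lambda>h. h <# R)"
    using l_cosets_transversal_family_ksub[OF subgroup_axioms assms(1,2)] assms(3)
    unfolding relative_difference_set_def by auto
next
  fix g assume "g \<in> (\<Union>h\<in>H. h <# R)"
  then have "g \<in> carrier G" "g \<notin> H" "g \<noteq> \<one>"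
    using l_cosets_transversal_cover[OF subgroup_axioms assms(2)]
      subgroup.one_closed[OF subgroup_axioms] by auto
  then show "count (Int_mset G H (\<lambda>h. h <# R)) g = n * lam"
    using count_Int_mset_l_cosets_rds[OF assms(1,3)] by simp
next
  fix g assume "g \<in> carrier G - ((\<Union>h\<in>H. h <# R) \<union> {\<one>})"
  then have "g \<in> carrier G" "g \<in> H" "g \<noteq> \<one>"
    using l_cosets_transversal_cover[OF subgroup_axioms assms(2)] by auto
  then show "count (Int_mset G H (\<lambda>h. h <# R)) g = 0"
    using count_Int_mset_l_cosets_rds[OF assms(1,3)] by simp
qed

lemma EPDF_l_cosets_transversal_rds:
  assumes "finite (carrier G)" "nontrivial_coset_transversal G H R"
    and "relative_difference_set G m n k lam H R"
  shows "EPDF G (m * n) n k (m * n - 2 * n - n * lam) (m * n - n) H (\<lambda>h. h <# R)"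
proof -
  let ?A = "\<lambda>h. h <# R"
  have family: "disjoint_family_ksub G n k H ?A"
    using l_cosets_transversal_family_ksub[OF subgroup_axioms assms(1,2)] assms(3)
    unfolding relative_difference_set_def by auto
  have cover: "(\<Union>h\<in>H. h <# R) = carrier G - H"
    by (rule l_cosets_transversal_cover[OF subgroup_axioms assms(2)])
  have order: "order G = m * n" and cardH: "card H = n"
    using assms(3) unfolding relative_difference_set_def by auto
  have cardC: "card (carrier G - H) = m * n - n"
    using order cardH assms(1) subset unfolding order_def by (simp add: card_Diff_subset finite_subset)
  have members: "\<forall>h\<in>H. finite (h <# R) \<and> h <# R \<subseteq> carrier G"
    using family assms(1) finite_subset unfolding disjoint_family_ksub_def by blast
  have disjoint: "disjoint_family_on ?A H" and finH: "finite H"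
    using family unfolding disjoint_family_ksub_def disjoint_family_on_def by auto
  have Ext_Int: "count (Ext_mset G H ?A) g + count (Int_mset G H ?A) g + n
      = (m * n - n) + diff_count G H H g" if "g \<in> carrier G" "g \<noteq> \<one>" for g
    using count_Ext_plus_Int_mset[OF finH members disjoint that]
      diff_count_complement[OF assms(1) subset that(1)] cover cardC cardH by simp
  show ?thesis
    unfolding EPDF_def
  proof (intro conjI ballI order family)
    fix g assume "g \<in> (\<Union>h\<in>H. h <# R)"
    then have g: "g \<in> carrier G" "g \<notin> H" "g \<noteq> \<one>"
      using cover subgroup.one_closed[OF subgroup_axioms] by auto
    then show "count (Ext_mset G H ?A) g = m * n - 2 * n - n * lam"
      using Ext_Int[OF g(1,3)] count_Int_mset_l_cosets_rds[OF assms(1,3) g(1,3)]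
        diff_count_subgroup[OF subgroup_axioms g(1)] by simp
  next
    fix g assume "g \<in> carrier G - ((\<Union>h\<in>H. h <# R) \<union> {\<one>})"
    then have g: "g \<in> carrier G" "g \<in> H" "g \<noteq> \<one>"
      using cover by auto
    then show "count (Ext_mset G H ?A) g = m * n - n"
      using Ext_Int[OF g(1,3)] count_Int_mset_l_cosets_rds[OF assms(1,3) g(1,3)]
        diff_count_subgroup[OF subgroup_axioms g(1)] cardH by simp
  qed
qed

end

theorem mainTheorem3:
  fixes G :: "('a, 'b) monoid_scheme" and H D R :: "'a set" and n m :: nat
  assumes "group G" and "finite (carrier G)"
    and "m = (n - 1)^2 + 1"
    and "order G = m * n"
    and "H \<lhd> G" and "card H = n"
    and "difference_set G (m * n) ((n - 1)^2 + n) n D"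
    and "H \<subseteq> D"
    and "R = D - H"
  shows "relative_difference_set G m n (m - 1) (n - 2) H R
     \<and> DPDF G (n * ((n - 1)^2 + 1)) n ((n - 1)^2) (n * (n - 2)) 0 H (\<lambda>h. h <#\<^bsub>G\<^esub> R)
     \<and> EPDF G (n * ((n - 1)^2 + 1)) n ((n - 1)^2) (n * (n - 1) * (n - 2)) (n * (n - 1)^2)
          H (\<lambda>h. h <#\<^bsub>G\<^esub> R)"
proof -
  interpret normal H G
    by (rule assms(5))
  have k: "(n - 1)^2 + n - card H + 1 = m" "(n - 1)^2 + n - card H = m - 1"
    using assms(3,6) by simp_all
  have D: "difference_set G (((n - 1)^2 + n - card H + 1) * card H) ((n - 1)^2 + n) (card H) D"
    using assms(6,7) k(1) by simp
  have transversal: "nontrivial_coset_transversal G H R"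
    using difference_set_minus_subgroup_transversal[OF subgroup_axioms assms(2) D assms(8)] assms(9)
    by simp
  have rds: "relative_difference_set G m n (m - 1) (n - 2) H R"
    using difference_set_minus_subgroup_rds[OF assms(2) D assms(8)] assms(6,9) k by simp
  \<comment> \<open>the parameters agree up to truncated subtraction, which needs the cases n < 2 separately\<close>
  consider "n = 0" | "n = 1" | j where "n = j + 2"
    by (metis One_nat_def add_2_eq_Suc' not0_implies_Suc)
  then have "m * n - 2 * n - n * (n - 2) = n * (n - 1) * (n - 2)" "m * n - n = n * (n - 1)^2"
    by cases (simp_all add: assms(3) power2_eq_square algebra_simps)
  then show ?thesis
    using rds DPDF_l_cosets_transversal_rds[OF assms(2) transversal rds]
      EPDF_l_cosets_transversal_rds[OF assms(2) transversal rds] assms(3) by (simp add: mult.commute)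
qed

end
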